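(* If $(X,d_X)$ is a separable metric space, then $\Delta_X^{(c)}(R)\leq 2R$ for all $R\in[0,\infty)$. Consequently, for every $\varepsilon>0$, every separable metric space $(4+\varepsilon)$-Lipschitz embeds into $c_0^+$.
   Context: For a cover $\mathcal{U}$ of $X$: $\mathrm{diam}(\mathcal{U})=\sup_{U\in\mathcal{U}}\mathrm{diam}(U)$; $\mathcal{L}(\mathcal{U})=\sup\{d\in[0,\infty): \text{every } E\subseteq X \text{ with } \mathrm{diam}(E)<d \text{ is contained in some } U\in\mathcal{U}\}$; point-finite means each point lies in only finitely many members. $\Delta_X^{(c)}(R)=\inf\{\mathrm{diam}(\mathcal{U}): \mathcal{U} \text{ point-finite cover of } X,\ \mathcal{L}(\mathcal{U})\geq R\}$. $c_0^+=\{(x_i)_{i\in\mathbb{N}}\in c_0: x_i\geq0\ \forall i\}$ with the sup-norm metric. A map $f$ is a $K$-Lipschitz embedding if it is injective and $\mathrm{Lip}(f)\cdot\mathrm{Lip}(f^{-1})\leq K$. *)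

theory Defs
  imports "HOL-Analysis.Analysis"
begin

(* diameter of a subset of a metric-space type, valued in [0,\<infinity>]; diam {} = 0 *)
definition ediam :: "'a::metric_space set \<Rightarrow> ennreal" where
  "ediam E = (SUP x\<in>E. SUP y\<in>E. ennreal (dist x y))"

definition cover_diam :: "'a::metric_space set set \<Rightarrow> ennreal" where
  "cover_diam \<U> = (SUP U\<in>\<U>. ediam U)"

definition lebesgue_num :: "'a::metric_space set \<Rightarrow> 'a set set \<Rightarrow> ennreal" where
  "lebesgue_num X \<U> = Sup {d. d \<noteq> \<infinity> \<and>
      (\<forall>E. E \<subseteq> X \<and> ediam E < d \<longrightarrow> (\<exists>U\<in>\<U>. E \<subseteq> U))}"

definition is_cover :: "'a set \<Rightarrow> 'a set set \<Rightarrow> bool" where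
  "is_cover X \<U> \<longleftrightarrow> (\<forall>U\<in>\<U>. U \<subseteq> X) \<and> \<Union>\<U> = X"

definition point_finite :: "'a set \<Rightarrow> 'a set set \<Rightarrow> bool" where
  "point_finite X \<U> \<longleftrightarrow> (\<forall>x\<in>X. finite {U\<in>\<U>. x \<in> U})"

(* \<Delta>_X^(c)(R); Inf of the empty set is \<infinity> *)
definition Delta_c :: "'a::metric_space set \<Rightarrow> real \<Rightarrow> ennreal" where
  "Delta_c X R = Inf {cover_diam \<U> | \<U>. is_cover X \<U> \<and> point_finite X \<U>
                       \<and> lebesgue_num X \<U> \<ge> ennreal R}"

definition c0plus :: "(nat \<Rightarrow> real) set" where
  "c0plus = {x. (\<forall>i. x i \<ge> 0) \<and> x \<longlonglongrightarrow> 0}"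

definition c0_dist :: "(nat \<Rightarrow> real) \<Rightarrow> (nat \<Rightarrow> real) \<Rightarrow> real" where
  "c0_dist x y = (SUP i. \<bar>x i - y i\<bar>)"

(* Lipschitz constant of f on S (w.r.t. distances d on the domain, d' on the codomain),
   valued in [0,\<infinity>]; equal to 0 if S has at most one point *)
definition lip_const :: "'a set \<Rightarrow> ('a \<Rightarrow> 'a \<Rightarrow> real) \<Rightarrow> ('b \<Rightarrow> 'b \<Rightarrow> real) \<Rightarrow> ('a \<Rightarrow> 'b) \<Rightarrow> ennreal" where
  "lip_const S d d' f = (SUP p\<in>{(x,y). x \<in> S \<and> y \<in> S \<and> x \<noteq> y}.
       ennreal (d' (f (fst p)) (f (snd p)) / d (fst p) (snd p)))"

definition lip_embeds_c0plus :: "'a::metric_space set \<Rightarrow> real \<Rightarrow> ('a \<Rightarrow> nat \<Rightarrow> real) \<Rightarrow> bool" where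
  "lip_embeds_c0plus X K f \<longleftrightarrow> f ` X \<subseteq> c0plus \<and> inj_on f X \<and>
     lip_const X dist c0_dist f * lip_const (f ` X) c0_dist dist (inv_into X f) \<le> ennreal K"

end

theory Submission
  imports Defs
begin

text \<open>Fix a dense sequence \<open>x\<^sub>0, x\<^sub>1, \<dots>\<close> in \<open>X\<close>. For \<open>R \<ge> 0\<close> and \<open>\<delta> > 0\<close> the greedy pieces
  \<open>U\<^sub>n = B(x\<^sub>n, R + \<delta>) - (\<Union>m<n. B(x\<^sub>m, \<delta>))\<close> have diameter below \<open>2(R + \<delta>)\<close>; a set of
  diameter at most \<open>R\<close> lies in \<open>U\<^sub>n\<close> for the first \<open>n\<close> with \<open>x\<^sub>n\<close> \<open>\<delta>\<close>-close to it, and a point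
  lies in no \<open>U\<^sub>n\<close> beyond the first \<open>n\<close> with \<open>x\<^sub>n\<close> \<open>\<delta>\<close>-close to it.

  For the embedding take the greedy pieces \<open>U\<close> at all scales \<open>s = b\<^sup>k\<close> (\<open>k \<in> \<int>\<close>, \<open>b > 1\<close>, slack
  \<open>\<delta> = (b - 1) s\<close>) and the 1-Lipschitz coordinates \<open>min (d(z, X - U)) (min s (max 0 (d(z, p) - s/2)))\<close>
  for a base point \<open>p\<close>. At the scale \<open>s \<approx> d(x, y) / (2b)\<close> the piece containing the ball
  \<open>B(y, s/2)\<close> misses \<open>x\<close>, so its coordinate vanishes at \<open>x\<close> and is at least \<open>d(x, y) / (4b\<^sup>2)\<close> at
  \<open>y\<close> (when \<open>y\<close> is the point farther from \<open>p\<close>). A coordinate exceeding \<open>r > 0\<close> at \<open>z\<close> needs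
  \<open>r \<le> s \<le> 2 d(z, p)\<close> and \<open>z \<in> U\<close>, so only finitely many do and the image lies in \<open>c\<^sub>0\<^sup>+\<close>.
  The distortion is \<open>4b\<^sup>2\<close>, which tends to 4 as \<open>b \<rightarrow> 1\<close>.\<close>

lemma dist_le_ediam: "x \<in> E \<Longrightarrow> y \<in> E \<Longrightarrow> ennreal (dist x y) \<le> ediam E"
  unfolding ediam_def by (meson SUP_upper2 order_refl)

lemma ediam_le: "(\<And>x y. x \<in> E \<Longrightarrow> y \<in> E \<Longrightarrow> dist x y \<le> c) \<Longrightarrow> ediam E \<le> ennreal c"
  unfolding ediam_def by (intro SUP_least ennreal_leI) auto

lemma exists_powr_int_between:
  fixes a b :: real
  assumes "1 < b" "0 < a"
  obtains k :: int where "a \<le> b powr k" "b powr k < b * a"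
proof
  define k where "k = \<lceil>log b a\<rceil>"
  have "log b a \<le> k" by (simp add: k_def)
  then show "a \<le> b powr k"
    using log_le_iff[OF assms] by blast
  have "real_of_int k < log b a + 1" unfolding k_def by linarith
  then have "b powr k < b powr (log b a + 1)"
    using assms(1) by (rule powr_less_mono)
  also have "\<dots> = b * a"
    using assms by (simp add: powr_add)
  finally show "b powr k < b * a" .
qed

lemma finite_powr_int_between:
  fixes b r M :: real
  assumes "1 < b" "0 < r"
  shows "finite {k::int. r \<le> b powr k \<and> b powr k \<le> M}"
proof (rule finite_subset)
  show "{k::int. r \<le> b powr k \<and> b powr k \<le> M} \<subseteq> {\<lfloor>log b r\<rfloor>..\<lceil>log b M\<rceil>}"
  proof
    fix k assume "k \<in> {k::int. r \<le> b powr k \<and> b powr k \<le> M}"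
    then have "r \<le> b powr k" "b powr k \<le> M" "M > 0" using assms(2) by auto
    then have "log b r \<le> k" "k \<le> log b M"
      using log_le_iff[OF assms] le_log_iff[OF assms(1) \<open>M > 0\<close>] by auto
    then show "k \<in> {\<lfloor>log b r\<rfloor>..\<lceil>log b M\<rceil>}" by simp linarith
  qed
qed simp

lemma LIMSEQ_zero_if_finite_superlevel_sets:
  fixes f :: "nat \<Rightarrow> real"
  assumes "\<And>i. 0 \<le> f i" "\<And>r. r > 0 \<Longrightarrow> finite {i. r \<le> f i}"
  shows "f \<longlonglongrightarrow> 0"
proof (rule LIMSEQ_I)
  fix r :: real assume "r > 0"
  then obtain N where "{i. r \<le> f i} \<subseteq> {..<N}"
    using assms(2) finite_nat_bounded by blast
  then have "\<forall>n\<ge>N. f n < r" by (auto simp: not_le[symmetric])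
  then show "\<exists>N. \<forall>n\<ge>N. norm (f n - 0) < r" using assms(1) by auto
qed

lemma abs_le_c0_dist:
  assumes "x \<longlonglongrightarrow> 0" "y \<longlonglongrightarrow> 0"
  shows "\<bar>x i - y i\<bar> \<le> c0_dist x y"
proof -
  have "(\<lambda>i. \<bar>x i - y i\<bar>) \<longlonglongrightarrow> 0"
    using tendsto_rabs[OF tendsto_diff[OF assms]] by simp
  then have "bdd_above (range (\<lambda>i. \<bar>x i - y i\<bar>))"
    by (intro Bseq_bdd_above convergent_imp_Bseq convergentI)
  then show ?thesis unfolding c0_dist_def by (rule cSUP_upper[rotated]) simp
qed

lemma c0_dist_le: "(\<And>i. \<bar>x i - y i\<bar> \<le> c) \<Longrightarrow> c0_dist x y \<le> c"
  unfolding c0_dist_def by (rule cSUP_least) auto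

lemma lip_embeds_c0plusI:
  fixes f :: "'a::metric_space \<Rightarrow> nat \<Rightarrow> real"
  assumes into: "f ` X \<subseteq> c0plus"
    and upper: "\<And>x y. x \<in> X \<Longrightarrow> y \<in> X \<Longrightarrow> c0_dist (f x) (f y) \<le> dist x y"
    and lower: "\<And>x y. x \<in> X \<Longrightarrow> y \<in> X \<Longrightarrow> dist x y \<le> K * c0_dist (f x) (f y)"
  shows "lip_embeds_c0plus X K f"
proof -
  have pos: "c0_dist (f x) (f y) > 0" if "x \<in> X" "y \<in> X" "x \<noteq> y" for x y
  proof -
    have "0 \<le> c0_dist (f x) (f y)"
      using abs_le_c0_dist[of "f x" "f y" 0] into that by (force simp: c0plus_def)
    moreover have "0 < K * c0_dist (f x) (f y)"
      using lower[OF that(1,2)] that by (metis dist_pos_lt order_less_le_trans)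
    ultimately show ?thesis by (metis less_eq_real_def mult_zero_right)
  qed
  have inj: "inj_on f X"
    by (rule inj_onI, rule ccontr) (use pos in \<open>fastforce simp: c0_dist_def\<close>)
  have "lip_const X dist c0_dist f \<le> 1"
    unfolding lip_const_def
    by (rule SUP_least) (auto intro!: ennreal_leI simp: upper)
  moreover have "lip_const (f ` X) c0_dist dist (inv_into X f) \<le> ennreal K"
    unfolding lip_const_def
  proof (rule SUP_least)
    fix q assume "q \<in> {(u, v). u \<in> f ` X \<and> v \<in> f ` X \<and> u \<noteq> v}"
    then obtain x y where q: "q = (f x, f y)" "x \<in> X" "y \<in> X" "x \<noteq> y" by blast
    then have "dist x y / c0_dist (f x) (f y) \<le> K"
      using lower pos by (simp add: divide_le_eq mult.commute)
    then show "ennreal (dist (inv_into X f (fst q)) (inv_into X f (snd q)) / c0_dist (fst q) (snd q))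
        \<le> ennreal K"
      using q inj by (simp add: ennreal_leI)
  qed
  ultimately have "lip_const X dist c0_dist f * lip_const (f ` X) c0_dist dist (inv_into X f) \<le> ennreal K"
    by (metis mult_mono mult_1 zero_le)
  then show ?thesis using into inj unfolding lip_embeds_c0plus_def by blast
qed

definition int_nat_decode :: "nat \<Rightarrow> int \<times> nat" where
  "int_nat_decode = map_prod int_decode id \<circ> prod_decode"

lemma bij_int_nat_decode: "bij int_nat_decode"
  unfolding int_nat_decode_def
  using bij_betw_map_prod[OF bij_int_decode bij_id]
  by (intro bij_comp[OF bij_prod_decode]) simp

locale dense_sequence =
  fixes X :: "'a::metric_space set" and xs :: "nat \<Rightarrow> 'a"
  assumes dense: "z \<in> X \<Longrightarrow> e > 0 \<Longrightarrow> \<exists>n. dist z (xs n) < e"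

lemma separable_space_obtains_dense_sequence:
  fixes X :: "'a::metric_space set"
  assumes "separable_space (subtopology euclidean X)"
  obtains xs where "dense_sequence X xs"
proof (cases "X = {}")
  case True
  then show ?thesis using that by (simp add: dense_sequence_def)
next
  case False
  obtain C where C: "countable C" "C \<subseteq> X" "subtopology euclidean X closure_of C = X"
    using assms unfolding separable_space_def by auto
  have X_closure: "X \<subseteq> closure C"
    using C by (metis closure_of_subtopology euclidean_closure_of inf.absorb_iff2 le_inf_iff order_refl)
  have "dense_sequence X (from_nat_into C)"
  proof
    fix z and e :: real
    assume "z \<in> X" "e > 0"
    then obtain c where "c \<in> C" "dist c z < e"
      using X_closure closure_approachable by blast
    then show "\<exists>n. dist z (from_nat_into C n) < e"
      by (metis C(1) dist_commute from_nat_into_to_nat_on)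
  qed
  then show ?thesis by (rule that)
qed

context dense_sequence
begin

definition greedy_piece :: "real \<Rightarrow> real \<Rightarrow> nat \<Rightarrow> 'a set" where
  "greedy_piece R \<delta> n = {w\<in>X. dist w (xs n) < R + \<delta> \<and> (\<forall>m<n. \<delta> \<le> dist w (xs m))}"

lemma finite_greedy_pieces_containing:
  assumes "\<delta> > 0" "z \<in> X"
  shows "finite {n. z \<in> greedy_piece R \<delta> n}"
proof -
  obtain n0 where "dist z (xs n0) < \<delta>" using dense assms by blast
  then have "{n. z \<in> greedy_piece R \<delta> n} \<subseteq> {..n0}"
    by (auto simp: greedy_piece_def not_le[symmetric])
  then show ?thesis using finite_subset by blast
qed

lemma subset_greedy_piece:
  assumes "\<delta> > 0" "E \<subseteq> X" "E \<noteq> {}" and diam: "\<And>e f. e \<in> E \<Longrightarrow> f \<in> E \<Longrightarrow> dist e f \<le> R"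
  shows "\<exists>n. E \<subseteq> greedy_piece R \<delta> n"
proof -
  define close where "close n \<longleftrightarrow> (\<exists>e\<in>E. dist e (xs n) < \<delta>)" for n
  obtain e where "e \<in> E" using assms by blast
  with dense assms obtain n1 where "close n1" unfolding close_def by blast
  define n where "n = (LEAST n. close n)"
  have "close n" unfolding n_def using \<open>close n1\<close> by (rule LeastI)
  then obtain e0 where e0: "e0 \<in> E" "dist e0 (xs n) < \<delta>" unfolding close_def by blast
  have "f \<in> greedy_piece R \<delta> n" if "f \<in> E" for f
  proof -
    have "dist f (xs n) \<le> dist f e0 + dist e0 (xs n)" by (rule dist_triangle)
    also have "\<dots> < R + \<delta>" using diam that e0 by (simp add: add_le_less_mono)
    finally have "dist f (xs n) < R + \<delta>" .
    moreover have "\<forall>m<n. \<delta> \<le> dist f (xs m)"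
      using not_less_Least[of _ close] that by (auto simp: n_def close_def not_less)
    ultimately show ?thesis using that assms by (auto simp: greedy_piece_def)
  qed
  then show ?thesis by blast
qed

lemma dist_greedy_piece_less:
  assumes "v \<in> greedy_piece R \<delta> n" "w \<in> greedy_piece R \<delta> n"
  shows "dist v w < 2 * (R + \<delta>)"
proof -
  have "dist v w \<le> dist v (xs n) + dist w (xs n)" by (rule dist_triangle2)
  also have "\<dots> < 2 * (R + \<delta>)" using assms by (simp add: greedy_piece_def)
  finally show ?thesis .
qed

lemma greedy_cover_is_cover:
  assumes "\<delta> > 0" "R \<ge> 0"
  shows "is_cover X (range (greedy_piece R \<delta>))"
proof -
  have "\<exists>n. z \<in> greedy_piece R \<delta> n" if "z \<in> X" for z
    using subset_greedy_piece[OF assms(1), of "{z}" R] that assms(2) by simp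
  then show ?thesis
    unfolding is_cover_def greedy_piece_def by blast
qed

lemma greedy_cover_point_finite:
  assumes "\<delta> > 0"
  shows "point_finite X (range (greedy_piece R \<delta>))"
  unfolding point_finite_def
proof
  fix z assume "z \<in> X"
  have "{U \<in> range (greedy_piece R \<delta>). z \<in> U} = greedy_piece R \<delta> ` {n. z \<in> greedy_piece R \<delta> n}"
    by blast
  then show "finite {U \<in> range (greedy_piece R \<delta>). z \<in> U}"
    using finite_greedy_pieces_containing[OF assms \<open>z \<in> X\<close>] by simp
qed

lemma greedy_cover_lebesgue_num:
  assumes "\<delta> > 0"
  shows "lebesgue_num X (range (greedy_piece R \<delta>)) \<ge> ennreal R"
  unfolding lebesgue_num_def
proof (rule Sup_upper, safe)
  fix E assume E: "E \<subseteq> X" "ediam E < ennreal R"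
  have "dist e f \<le> R" if "e \<in> E" "f \<in> E" for e f
  proof -
    have "ennreal (dist e f) < ennreal R"
      using dist_le_ediam[OF that] E(2) by (rule le_less_trans)
    then show ?thesis by (simp add: ennreal_less_iff)
  qed
  then show "\<exists>U\<in>range (greedy_piece R \<delta>). E \<subseteq> U"
    using subset_greedy_piece[OF assms E(1)] by (cases "E = {}") auto
qed simp

lemma greedy_cover_diam: "cover_diam (range (greedy_piece R \<delta>)) \<le> ennreal (2 * (R + \<delta>))"
  unfolding cover_diam_def
  by (intro SUP_least ediam_le) (auto dest: dist_greedy_piece_less)

lemma Delta_c_le: "R \<ge> 0 \<Longrightarrow> Delta_c X R \<le> ennreal (2 * R)"
proof (rule ennreal_le_epsilon)
  fix \<epsilon> :: real assume "R \<ge> 0" "\<epsilon> > 0"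
  define \<U> where "\<U> = range (greedy_piece R (\<epsilon> / 2))"
  have "is_cover X \<U>" "point_finite X \<U>" "lebesgue_num X \<U> \<ge> ennreal R"
    unfolding \<U>_def using \<open>R \<ge> 0\<close> \<open>\<epsilon> > 0\<close>
    by (simp_all add: greedy_cover_is_cover greedy_cover_point_finite greedy_cover_lebesgue_num)
  then have "Delta_c X R \<le> cover_diam \<U>"
    unfolding Delta_c_def by (blast intro: Inf_lower)
  also have "\<dots> \<le> ennreal (2 * (R + \<epsilon> / 2))"
    unfolding \<U>_def by (rule greedy_cover_diam)
  also have "\<dots> = ennreal (2 * R + \<epsilon>)"
    by (simp add: algebra_simps)
  also have "\<dots> = ennreal (2 * R) + ennreal \<epsilon>"
    using \<open>R \<ge> 0\<close> \<open>\<epsilon> > 0\<close> by (simp add: ennreal_plus)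
  finally show "Delta_c X R \<le> ennreal (2 * R) + ennreal \<epsilon>" .
qed

definition scaled_piece :: "real \<Rightarrow> int \<Rightarrow> nat \<Rightarrow> 'a set" where
  "scaled_piece b k n = greedy_piece (b powr k) ((b - 1) * b powr k) n"

definition coordinate :: "real \<Rightarrow> 'a \<Rightarrow> int \<Rightarrow> nat \<Rightarrow> 'a \<Rightarrow> real" where
  "coordinate b p k n z = min (infdist z (X - scaled_piece b k n))
     (min (b powr k) (max 0 (dist z p - b powr k / 2)))"

lemma coordinate_nonneg: "b > 1 \<Longrightarrow> 0 \<le> coordinate b p k n z"
  by (simp add: coordinate_def infdist_nonneg)

lemma coordinate_le_add_dist: "coordinate b p k n z \<le> coordinate b p k n w + dist z w"
proof -
  have "infdist z (X - scaled_piece b k n) \<le> infdist w (X - scaled_piece b k n) + dist z w"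
    by (rule infdist_triangle)
  moreover have "dist z p \<le> dist z w + dist w p" by (rule dist_triangle)
  ultimately show ?thesis
    unfolding coordinate_def using zero_le_dist[of z w] by linarith
qed

lemma coordinate_lipschitz: "\<bar>coordinate b p k n z - coordinate b p k n w\<bar> \<le> dist z w"
  using coordinate_le_add_dist[of b p k n z w] coordinate_le_add_dist[of b p k n w z]
  by (simp add: dist_commute abs_le_iff)

lemma ball_subset_scaled_piece:
  fixes k :: int
  assumes "b > 1" "y \<in> X"
  obtains n where "{w\<in>X. dist y w < b powr k / 2} \<subseteq> scaled_piece b k n"
proof -
  have "dist e f \<le> b powr k" if "e \<in> X" "f \<in> X" "dist y e < b powr k / 2" "dist y f < b powr k / 2" for e f
    using dist_triangle3[of e f y] that by linarith
  moreover have "(b - 1) * b powr k > 0" using assms by simp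
  ultimately show ?thesis
    using subset_greedy_piece[of "(b - 1) * b powr k" "{w\<in>X. dist y w < b powr k / 2}" "b powr k"]
      assms that by (force simp: scaled_piece_def)
qed

lemma coordinate_separates:
  assumes "b > 1" "x \<in> X" "y \<in> X" "x \<noteq> y" and far: "dist x y \<le> 2 * dist y p"
  obtains k n where "coordinate b p k n x = 0" "dist x y / (4 * b\<^sup>2) \<le> coordinate b p k n y"
proof -
  define t where "t = dist x y"
  have "t / (2 * b\<^sup>2) > 0" using assms by (simp add: t_def)
  then obtain k :: int where k: "t / (2 * b\<^sup>2) \<le> b powr k" "b powr k < b * (t / (2 * b\<^sup>2))"
    using exists_powr_int_between \<open>b > 1\<close> by blast
  define s where "s = b powr k"
  have "s > 0" using assms by (simp add: s_def)
  have "2 * b * s < t"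
    using k \<open>b > 1\<close> by (simp add: s_def field_simps power2_eq_square)
  obtain n where n: "{w\<in>X. dist y w < s / 2} \<subseteq> scaled_piece b k n"
    using ball_subset_scaled_piece[OF assms(1,3)] unfolding s_def by blast
  define U where "U = scaled_piece b k n"
  have "y \<in> U" using n \<open>y \<in> X\<close> \<open>s > 0\<close> by (auto simp: U_def)
  have "x \<notin> U"
  proof
    assume "x \<in> U"
    then have "dist x y < 2 * (s + (b - 1) * s)"
      using dist_greedy_piece_less \<open>y \<in> U\<close> by (simp add: U_def scaled_piece_def s_def)
    with \<open>2 * b * s < t\<close> show False by (simp add: t_def algebra_simps)
  qed
  have "s / 2 \<le> infdist y (X - U)"
  proof -
    have far_from_y: "s / 2 \<le> dist y w" if "w \<in> X - U" for w
      using n that by (force simp: U_def not_less)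
    have "X - U \<noteq> {}" using \<open>x \<in> X\<close> \<open>x \<notin> U\<close> by blast
    then show ?thesis
      unfolding infdist_notempty[OF \<open>X - U \<noteq> {}\<close>] using far_from_y by (rule cINF_greatest)
  qed
  moreover have "s / 2 \<le> dist y p - s / 2"
  proof -
    have "s \<le> b * s" using \<open>b > 1\<close> \<open>s > 0\<close> by simp
    then show ?thesis using far \<open>2 * b * s < t\<close> unfolding t_def by linarith
  qed
  ultimately have "s / 2 \<le> coordinate b p k n y"
    using \<open>s > 0\<close> unfolding coordinate_def U_def s_def by linarith
  moreover have "t / (4 * b\<^sup>2) = t / (2 * b\<^sup>2) / 2" by simp
  moreover have "coordinate b p k n x = 0"
    using \<open>x \<in> X\<close> \<open>x \<notin> U\<close> coordinate_nonneg[OF \<open>b > 1\<close>, of p k n x]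
    by (simp add: coordinate_def U_def)
  ultimately show ?thesis using that[of k n] k(1) unfolding t_def s_def by linarith
qed

lemma coordinates_separate_points:
  assumes "b > 1" "x \<in> X" "y \<in> X"
  obtains k n where "dist x y / (4 * b\<^sup>2) \<le> \<bar>coordinate b p k n x - coordinate b p k n y\<bar>"
proof (cases "x = y")
  case False
  consider "dist x y \<le> 2 * dist y p" | "dist y x \<le> 2 * dist x p"
    using dist_triangle2[of x y p] dist_commute[of x y] by linarith
  then show ?thesis
  proof cases
    case 1
    with coordinate_separates[OF assms] False obtain k n
      where "coordinate b p k n x = 0" "dist x y / (4 * b\<^sup>2) \<le> coordinate b p k n y"
      by blast
    then show ?thesis using that[of k n] by simp
  next
    case 2
    with coordinate_separates[OF assms(1,3,2)] False obtain k n
      where "coordinate b p k n y = 0" "dist y x / (4 * b\<^sup>2) \<le> coordinate b p k n x"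
      by metis
    then show ?thesis using that[of k n] by (simp add: dist_commute)
  qed
qed (use that[of 0 0] in simp)

lemma finite_coordinates_ge:
  assumes "b > 1" "z \<in> X" "r > 0"
  shows "finite {(k, n). r \<le> coordinate b p k n z}"
proof (rule finite_subset)
  let ?K = "{k::int. r \<le> b powr k \<and> b powr k \<le> 2 * dist z p}"
  show "{(k, n). r \<le> coordinate b p k n z} \<subseteq> Sigma ?K (\<lambda>k. {n. z \<in> scaled_piece b k n})"
  proof clarify
    fix k n assume r: "r \<le> coordinate b p k n z"
    then have "r \<le> infdist z (X - scaled_piece b k n)" "r \<le> b powr k" "r \<le> dist z p - b powr k / 2"
      using \<open>r > 0\<close> by (auto simp: coordinate_def le_max_iff_disj)
    then show "k \<in> ?K \<and> n \<in> {n. z \<in> scaled_piece b k n}"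
      using \<open>z \<in> X\<close> \<open>r > 0\<close> by (cases "z \<in> scaled_piece b k n") auto
  qed
  show "finite (Sigma ?K (\<lambda>k. {n. z \<in> scaled_piece b k n}))"
    using finite_powr_int_between[OF \<open>b > 1\<close> \<open>r > 0\<close>] finite_greedy_pieces_containing \<open>b > 1\<close> \<open>z \<in> X\<close>
    unfolding scaled_piece_def by (intro finite_SigmaI) auto
qed

lemma lip_embeds_coordinates:
  fixes p :: 'a
  assumes "b > 1"
  defines "f \<equiv> \<lambda>z i. case_prod (\<lambda>k n. coordinate b p k n z) (int_nat_decode i)"
  shows "lip_embeds_c0plus X (4 * b\<^sup>2) f"
proof (rule lip_embeds_c0plusI)
  have "f z \<longlonglongrightarrow> 0" if "z \<in> X" for z
  proof (rule LIMSEQ_zero_if_finite_superlevel_sets)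
    show "0 \<le> f z i" for i
      using coordinate_nonneg[OF \<open>b > 1\<close>] by (simp add: f_def split: prod.split)
    fix r :: real assume "r > 0"
    have "finite (int_nat_decode -` {(k, n). r \<le> coordinate b p k n z})"
      using finite_coordinates_ge[OF \<open>b > 1\<close> \<open>z \<in> X\<close> \<open>r > 0\<close>]
        bij_is_inj[OF bij_int_nat_decode]
      by (rule finite_vimageI)
    moreover have "{i. r \<le> f z i} = int_nat_decode -` {(k, n). r \<le> coordinate b p k n z}"
      by (auto simp: f_def split: prod.splits)
    ultimately show "finite {i. r \<le> f z i}" by simp
  qed
  then show "f ` X \<subseteq> c0plus"
    using coordinate_nonneg[OF \<open>b > 1\<close>] by (auto simp: c0plus_def f_def split: prod.split)
  show "c0_dist (f x) (f y) \<le> dist x y" for x y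
    by (rule c0_dist_le) (simp add: f_def coordinate_lipschitz split: prod.split)
  fix x y assume "x \<in> X" "y \<in> X"
  then obtain k n where "dist x y / (4 * b\<^sup>2) \<le> \<bar>coordinate b p k n x - coordinate b p k n y\<bar>"
    using coordinates_separate_points[OF \<open>b > 1\<close>] by blast
  also obtain i where "int_nat_decode i = (k, n)"
    using bij_int_nat_decode by (metis bij_pointE)
  then have "\<bar>coordinate b p k n x - coordinate b p k n y\<bar> \<le> c0_dist (f x) (f y)"
    using abs_le_c0_dist[of "f x" "f y" i] \<open>\<And>z. z \<in> X \<Longrightarrow> f z \<longlonglongrightarrow> 0\<close> \<open>x \<in> X\<close> \<open>y \<in> X\<close>
    by (simp add: f_def)
  finally show "dist x y \<le> 4 * b\<^sup>2 * c0_dist (f x) (f y)"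
    using \<open>b > 1\<close> by (simp add: divide_le_eq mult.commute)
qed

end

theorem proposition4p2:
  fixes X :: "'a::metric_space set"
  assumes "separable_space (subtopology euclidean X)"
  shows "(\<forall>R\<ge>0. Delta_c X R \<le> ennreal (2 * R)) \<and>
         (\<forall>\<epsilon>>0. \<exists>f. lip_embeds_c0plus X (4 + \<epsilon>) f)"
proof -
  obtain xs where "dense_sequence X xs"
    using separable_space_obtains_dense_sequence[OF assms] .
  then interpret dense_sequence X xs .
  have "\<exists>f. lip_embeds_c0plus X (4 + \<epsilon>) f" if "\<epsilon> > 0" for \<epsilon>
  proof -
    define b where "b = sqrt (1 + \<epsilon> / 4)"
    have "b > 1" "4 * b\<^sup>2 = 4 + \<epsilon>" using that by (simp_all add: b_def)
    then show ?thesis using lip_embeds_coordinates by metis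
  qed
  then show ?thesis using Delta_c_le by blast
qed

end
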